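(* Let $d\ge c\ge 1$ be integers and let $W\in\mathbb{R}^{c\times d}$ satisfy $WW^T=I_c$. Let $\Sigma\in\mathbb{R}^{c\times c}$ be symmetric positive definite and let $R\in\mathcal{O}(c)$ be an orthogonal matrix such that every diagonal coefficient of $R\Sigma R^T$ equals $\operatorname{Tr}(\Sigma)/c$. Let $\epsilon>0$ and let $x_{t_1},x_{t_2}$ be random vectors in $\mathbb{R}^d$ such that $Wx_{t_1}\sim\mathcal{N}(\mathbf{0},\Sigma)$, $Wx_{t_2}\sim\mathcal{N}(\mathbf{0},\Sigma)$ and $\|x_{t_1}-x_{t_2}\|_2\le\epsilon$ almost surely. Let $b_{t_j}=\operatorname{sign}(RWx_{t_j})\in\{-1,1\}^c$ for $j\in\{1,2\}$. Then $$\mathbb{P}\big[\operatorname{dist}_H(b_{t_1},b_{t_2})>0\big]\ \le\ 2\epsilon\sqrt{\frac{2}{\pi}}\;c^{3/2}\,\big(\operatorname{Tr}(\Sigma)\big)^{-1/2}.$$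
   Context: $\operatorname{sign}(x)=1$ if $x\ge 0$ and $-1$ otherwise, applied component-wise to vectors. $\operatorname{dist}_H$ is the Hamming distance (number of coordinates in which two vectors differ). $\mathcal{O}(c)$ is the set of $c\times c$ real orthogonal matrices; $\operatorname{Tr}$ is the trace; $I_c$ is the $c\times c$ identity matrix. *)

theory Defs
  imports "HOL-Probability.Probability"
begin

definition pos_def_matrix :: "real^'n^'n \<Rightarrow> bool" where
  "pos_def_matrix S \<longleftrightarrow> transpose S = S \<and> (\<forall>v. v \<noteq> 0 \<longrightarrow> v \<bullet> (S *v v) > 0)"

definition gaussian_density :: "real^'n^'n \<Rightarrow> real^'n \<Rightarrow> real" where
  "gaussian_density S y =
     exp (- (y \<bullet> (matrix_inv S *v y)) / 2) / sqrt ((2 * pi) ^ CARD('n) * det S)"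

definition has_normal_law :: "'a measure \<Rightarrow> ('a \<Rightarrow> real^'n) \<Rightarrow> real^'n^'n \<Rightarrow> bool" where
  "has_normal_law M X S \<longleftrightarrow> distributed M lborel X (\<lambda>y. ennreal (gaussian_density S y))"

text \<open>Componentwise sign, with sign 0 = 1.\<close>
definition sign_vec :: "real^'n \<Rightarrow> real^'n" where
  "sign_vec v = (\<chi> i. if v $ i \<ge> 0 then 1 else -1)"

definition hamming_dist :: "'b^'n \<Rightarrow> 'b^'n \<Rightarrow> nat" where
  "hamming_dist a b = card {i. a $ i \<noteq> b $ i}"

end

theory Submission
  imports Defs
begin

text \<open>
  A sign flip in coordinate \<open>i\<close> forces \<open>|\<langle>r\<^sub>i, W x\<^sub>1\<rangle>| \<le> \<parallel>x\<^sub>1 - x\<^sub>2\<parallel> \<le> \<epsilon>\<close>, where \<open>r\<^sub>i\<close> is the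
  \<open>i\<close>-th row of \<open>R\<close>, because \<open>R\<close> is an isometry and \<open>W\<close> a co-isometry. The diagonal hypothesis
  says that each \<open>\<langle>r\<^sub>i, W x\<^sub>1\<rangle>\<close> is a centred Gaussian of variance \<open>Tr \<Sigma> / c\<close>, so a union bound
  over the \<open>c\<close> coordinates reduces the claim to the small-ball estimate
  \<open>P(|\<langle>u, Y\<rangle>| \<le> \<epsilon>) \<le> \<epsilon> \<surd>(2/\<pi>) / \<surd>(u\<^sup>T \<Sigma> u)\<close> for \<open>Y \<sim> N(0, \<Sigma>)\<close>.

  That estimate is proved without computing the law of \<open>\<langle>u, Y\<rangle>\<close>. Let \<open>F a\<close> be the Gaussian
  mass of the slab \<open>|\<langle>u, y\<rangle> - a| \<le> \<epsilon>\<close>. Translating by \<open>a \<Sigma> u / (u\<^sup>T \<Sigma> u)\<close> moves this slab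
  onto the slab at \<open>0\<close> and multiplies the density by \<open>exp (-(2 a \<langle>u, y\<rangle> + a\<^sup>2) / (2 u\<^sup>T \<Sigma> u))\<close>;
  averaging \<open>a\<close> and \<open>-a\<close> gives \<open>F a + F (-a) \<ge> 2 exp (-a\<^sup>2 / (2 u\<^sup>T \<Sigma> u)) F 0\<close>. Integrating
  over \<open>a\<close>, with \<open>\<integral> F = 2 \<epsilon>\<close> by Fubini, yields the estimate, which is half the stated
  constant.
\<close>

lemma inner_matrix_vector_mult_transpose:
  fixes A :: "real^'n^'m"
  shows "(A *v x) \<bullet> y = x \<bullet> (transpose A *v y)"
  by (metis dot_lmul_matrix inner_commute transpose_matrix_vector)

lemma norm_matrix_vector_mult_le_if_orthonormal_rows:
  fixes W :: "real^'d^'c"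
  assumes "W ** transpose W = mat 1"
  shows "norm (W *v z) \<le> norm z"
proof -
  have isometry: "norm (transpose W *v y) = norm y" for y
  proof -
    have "(transpose W *v y) \<bullet> (transpose W *v y) = y \<bullet> (W *v (transpose W *v y))"
      by (metis inner_matrix_vector_mult_transpose transpose_transpose)
    also have "\<dots> = y \<bullet> y"
      by (simp only: matrix_vector_mul_assoc assms matrix_vector_mul_lid)
    finally show ?thesis by (simp add: norm_eq_sqrt_inner)
  qed
  have "norm (W *v z) * norm (W *v z) = z \<bullet> (transpose W *v (W *v z))"
    by (metis inner_matrix_vector_mult_transpose power2_norm_eq_inner power2_eq_square)
  also have "\<dots> \<le> norm z * norm (W *v z)"
    using norm_cauchy_schwarz[of z "transpose W *v (W *v z)"] isometry by simp
  finally show ?thesis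
    by (cases "norm (W *v z) = 0") (simp_all add: mult_le_cancel_right)
qed

lemma norm_orthogonal_matrix_vector_mult:
  fixes R :: "real^'n^'n"
  assumes "orthogonal_matrix R"
  shows "norm (R *v x) = norm x"
  using assms orthogonal_transformation_matrix orthogonal_transformation_norm
  by (metis matrix_of_matrix_vector_mul matrix_vector_mul_linear)

lemma norm_row_orthogonal_matrix:
  fixes R :: "real^'n^'n"
  assumes "orthogonal_matrix R"
  shows "norm (R $ i) = 1"
  using assms by (simp add: orthogonal_matrix_orthonormal_rows row_def vec_lambda_eta)

lemma matrix_congruence_diagonal:
  fixes R S :: "real^'n^'n"
  shows "(R ** S ** transpose R) $ i $ i = R $ i \<bullet> (S *v R $ i)"
proof -
  have "(R ** S ** transpose R) $ i $ i = ((R $ i) v* S) \<bullet> R $ i"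
    by (simp add: matrix_matrix_mult_def vector_matrix_mult_def transpose_def inner_vec_def)
  then show ?thesis by (simp add: dot_lmul_matrix)
qed

lemma pos_def_matrix_inverse:
  fixes S :: "real^'n^'n"
  assumes "pos_def_matrix S"
  shows "matrix_inv S ** S = mat 1" "S ** matrix_inv S = mat 1"
proof -
  have "\<forall>x. S *v x = 0 \<longrightarrow> x = 0"
    using assms unfolding pos_def_matrix_def by (metis inner_zero_right less_irrefl)
  then have "invertible S"
    using matrix_left_invertible_ker invertible_left_inverse by blast
  then have "S ** matrix_inv S = mat 1 \<and> matrix_inv S ** S = mat 1"
    unfolding invertible_def matrix_inv_def by (rule someI_ex)
  then show "matrix_inv S ** S = mat 1" "S ** matrix_inv S = mat 1" by auto
qed

lemma inverse_quadratic_form_shift: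
  fixes S :: "real^'n^'n" and u y :: "real^'n"
  assumes S: "pos_def_matrix S" and var: "var = u \<bullet> (S *v u)" "var > 0"
  defines "v \<equiv> (1 / var) *\<^sub>R (S *v u)"
  shows "(a *\<^sub>R v + y) \<bullet> (matrix_inv S *v (a *\<^sub>R v + y))
       = y \<bullet> (matrix_inv S *v y) + (2 * a * (u \<bullet> y) + a\<^sup>2) / var"
proof -
  let ?T = "matrix_inv S"
  have "transpose ?T ** S = mat 1"
    using S pos_def_matrix_inverse(2)[OF S] unfolding pos_def_matrix_def
    by (metis matrix_transpose_mul transpose_mat)
  then have "transpose ?T *v v = (1 / var) *\<^sub>R u"
    unfolding v_def by (simp only: matrix_vector_mult_scaleR matrix_vector_mul_assoc matrix_vector_mul_lid)
  then have vT: "v \<bullet> (?T *v y) = (u \<bullet> y) / var"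
    using dot_lmul_matrix[of v ?T y] by simp
  have Tv: "?T *v v = (1 / var) *\<^sub>R u"
    unfolding v_def using pos_def_matrix_inverse(1)[OF S]
    by (simp add: matrix_vector_mult_scaleR matrix_vector_mul_assoc)
  have "(a *\<^sub>R v + y) \<bullet> (?T *v (a *\<^sub>R v + y))
      = y \<bullet> (?T *v y) + a * (y \<bullet> (?T *v v)) + a * (v \<bullet> (?T *v y)) + a * a * (v \<bullet> (?T *v v))"
    by (simp add: matrix_vector_right_distrib vec.scale inner_add_left inner_add_right algebra_simps)
  also have "\<dots> = y \<bullet> (?T *v y) + (2 * a * (u \<bullet> y) + a\<^sup>2) / var"
    using Tv vT var unfolding v_def by (simp add: inner_commute power2_eq_square field_simps)
  finally show ?thesis .
qed

lemma gaussian_density_shift: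
  fixes S :: "real^'n^'n" and u y :: "real^'n"
  assumes "pos_def_matrix S" and "var = u \<bullet> (S *v u)" "var > 0"
  shows "gaussian_density S (a *\<^sub>R ((1 / var) *\<^sub>R (S *v u)) + y)
       = gaussian_density S y * exp (- (2 * a * (u \<bullet> y) + a\<^sup>2) / (2 * var))"
proof -
  have "exp (- (Q + X / var) / 2) = exp (- Q / 2) * exp (- X / (2 * var))" for Q X :: real
  proof -
    have "- (Q + X / var) / 2 = - Q / 2 + - X / (2 * var)"
      using assms(3) by (simp add: field_simps)
    then show ?thesis by (simp only: exp_add)
  qed
  then show ?thesis
    unfolding gaussian_density_def inverse_quadratic_form_shift[OF assms]
    by (simp only: times_divide_eq_left)
qed

lemma borel_measurable_gaussian_density [measurable]:
  fixes S :: "real^'n^'n"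
  shows "gaussian_density S \<in> borel_measurable borel"
proof -
  have "gaussian_density S
      = (\<lambda>y. exp (- (y \<bullet> (matrix_inv S *v y)) / 2) * (1 / sqrt ((2 * pi) ^ CARD('n) * det S)))"
    by (simp add: gaussian_density_def fun_eq_iff)
  also have "\<dots> \<in> borel_measurable borel"
    by (intro borel_measurable_continuous_onI continuous_intros) auto
  finally show ?thesis .
qed

text \<open>Normalisation forces the constant \<open>sqrt ((2 \<pi>)\<^sup>n det S)\<close> to be nonnegative; this avoids
  having to show \<open>det S > 0\<close>.\<close>
lemma gaussian_density_nonneg:
  fixes S :: "real^'n^'n"
  assumes "(\<integral>\<^sup>+ y. ennreal (gaussian_density S y) \<partial>lborel) = 1"
  shows "gaussian_density S y \<ge> 0"
proof -
  define K where "K = sqrt ((2 * pi) ^ CARD('n) * det S)"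
  have density: "gaussian_density S z = exp (- (z \<bullet> (matrix_inv S *v z)) / 2) / K" for z
    unfolding gaussian_density_def K_def ..
  have "K \<ge> 0"
  proof (rule ccontr)
    assume "\<not> K \<ge> 0"
    then have "ennreal (gaussian_density S z) = 0" for z
      unfolding density by (simp add: ennreal_neg divide_pos_neg less_imp_le)
    with assms show False by simp
  qed
  then show ?thesis unfolding density by simp
qed

lemma exp_symmetric_sum_ge:
  fixes a t v :: real
  shows "2 * exp (- a\<^sup>2 / (2 * v)) \<le> exp (- (2 * a * t + a\<^sup>2) / (2 * v)) + exp (- (2 * (- a) * t + (- a)\<^sup>2) / (2 * v))"
proof (cases "v = 0")
  case False
  define s where "s = a * t / v"
  have "exp (- (2 * a * t + a\<^sup>2) / (2 * v)) + exp (- (2 * (- a) * t + (- a)\<^sup>2) / (2 * v))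
      = exp (- a\<^sup>2 / (2 * v)) * (exp (- s) + exp s)"
    unfolding s_def distrib_left exp_add[symmetric] using False by (simp add: field_simps)
  also have "\<dots> = exp (- a\<^sup>2 / (2 * v)) * (2 * cosh s)"
    by (simp add: cosh_field_def)
  also have "\<dots> \<ge> exp (- a\<^sup>2 / (2 * v)) * 2"
    using cosh_real_ge_1[of s] by (intro mult_left_mono) auto
  finally show ?thesis by simp
qed simp

lemma nn_integral_exp_neg_square:
  fixes v :: real
  assumes "v > 0"
  shows "(\<integral>\<^sup>+ a. ennreal (exp (- a\<^sup>2 / (2 * v))) \<partial>lborel) = ennreal (sqrt (2 * pi * v))"
proof -
  have "ennreal (exp (- a\<^sup>2 / (2 * v))) = ennreal (sqrt (2 * pi * v)) * ennreal (normal_density 0 (sqrt v) a)" for a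
    using assms by (simp add: normal_density_def ennreal_mult[symmetric])
  then have "(\<integral>\<^sup>+ a. ennreal (exp (- a\<^sup>2 / (2 * v))) \<partial>lborel)
      = ennreal (sqrt (2 * pi * v)) * (\<integral>\<^sup>+ a. ennreal (normal_density 0 (sqrt v) a) \<partial>lborel)"
    by (simp add: nn_integral_cmult)
  also have "(\<integral>\<^sup>+ a. ennreal (normal_density 0 (sqrt v) a) \<partial>lborel) = 1"
    using assms by (subst nn_integral_eq_integral) auto
  finally show ?thesis by simp
qed

definition slab_mass :: "real^'n^'n \<Rightarrow> real^'n \<Rightarrow> real \<Rightarrow> real \<Rightarrow> ennreal" where
  "slab_mass S u \<epsilon> a = (\<integral>\<^sup>+ y. ennreal (gaussian_density S y) * indicator {y. \<bar>u \<bullet> y - a\<bar> \<le> \<epsilon>} y \<partial>lborel)"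

lemma borel_measurable_slab_mass [measurable]:
  fixes S :: "real^'n^'n"
  shows "slab_mass S u \<epsilon> \<in> borel_measurable borel"
  unfolding slab_mass_def[abs_def] indicator_def by measurable

lemma slab_mass_shift:
  fixes S :: "real^'n^'n" and u :: "real^'n"
  assumes "pos_def_matrix S" and "var = u \<bullet> (S *v u)" "var > 0"
  shows "slab_mass S u \<epsilon> a
       = (\<integral>\<^sup>+ y. ennreal (gaussian_density S y * exp (- (2 * a * (u \<bullet> y) + a\<^sup>2) / (2 * var)))
                 * indicator {y. \<bar>u \<bullet> y\<bar> \<le> \<epsilon>} y \<partial>lborel)"
proof -
  define v where "v = (1 / var) *\<^sub>R (S *v u)"
  define G where "G y = ennreal (gaussian_density S y) * indicator {y. \<bar>u \<bullet> y - a\<bar> \<le> \<epsilon>} y" for y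
  have [measurable]: "G \<in> borel_measurable borel"
    unfolding G_def indicator_def by measurable
  have "slab_mass S u \<epsilon> a = (\<integral>\<^sup>+ y. G y \<partial>distr lborel borel ((+) (a *\<^sub>R v)))"
    unfolding slab_mass_def G_def by (simp add: lborel_distr_plus)
  also have "\<dots> = (\<integral>\<^sup>+ y. G (a *\<^sub>R v + y) \<partial>lborel)"
    by (rule nn_integral_distr) auto
  also have "\<dots> = (\<integral>\<^sup>+ y. ennreal (gaussian_density S y * exp (- (2 * a * (u \<bullet> y) + a\<^sup>2) / (2 * var)))
                 * indicator {y. \<bar>u \<bullet> y\<bar> \<le> \<epsilon>} y \<partial>lborel)"
  proof (rule nn_integral_cong)
    fix y :: "real^'n"
    have "u \<bullet> (a *\<^sub>R v + y) - a = u \<bullet> y"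
      using assms(2,3) unfolding v_def by (simp add: inner_add_right)
    then show "G (a *\<^sub>R v + y) = ennreal (gaussian_density S y * exp (- (2 * a * (u \<bullet> y) + a\<^sup>2) / (2 * var)))
                 * indicator {y. \<bar>u \<bullet> y\<bar> \<le> \<epsilon>} y"
      unfolding G_def v_def gaussian_density_shift[OF assms] indicator_def by simp
  qed
  finally show ?thesis .
qed

lemma slab_mass_symmetric_ge:
  fixes S :: "real^'n^'n" and u :: "real^'n"
  assumes "pos_def_matrix S" and "var = u \<bullet> (S *v u)" "var > 0"
    and total: "(\<integral>\<^sup>+ y. ennreal (gaussian_density S y) \<partial>lborel) = 1"
  shows "ennreal (2 * exp (- a\<^sup>2 / (2 * var))) * slab_mass S u \<epsilon> 0
       \<le> slab_mass S u \<epsilon> a + slab_mass S u \<epsilon> (- a)"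
proof -
  let ?f = "gaussian_density S"
  let ?I = "indicator {y. \<bar>u \<bullet> y\<bar> \<le> \<epsilon>} :: real^'n \<Rightarrow> ennreal"
  let ?e = "\<lambda>a y. exp (- (2 * a * (u \<bullet> y) + a\<^sup>2) / (2 * var))"
  have [measurable]: "?I \<in> borel_measurable borel"
    unfolding indicator_def by measurable
  have "ennreal (2 * exp (- a\<^sup>2 / (2 * var))) * slab_mass S u \<epsilon> 0
      = (\<integral>\<^sup>+ y. ennreal (2 * exp (- a\<^sup>2 / (2 * var))) * (ennreal (?f y) * ?I y) \<partial>lborel)"
    unfolding slab_mass_def by (simp add: nn_integral_cmult)
  also have "\<dots> \<le> (\<integral>\<^sup>+ y. ennreal (?f y * ?e a y) * ?I y + ennreal (?f y * ?e (- a) y) * ?I y \<partial>lborel)"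
  proof (rule nn_integral_mono)
    fix y
    have "2 * exp (- a\<^sup>2 / (2 * var)) * ?f y \<le> (?e a y + ?e (- a) y) * ?f y"
      using exp_symmetric_sum_ge gaussian_density_nonneg[OF total] by (rule mult_right_mono)
    then have "ennreal (2 * exp (- a\<^sup>2 / (2 * var))) * ennreal (?f y) \<le> ennreal (?f y * ?e a y) + ennreal (?f y * ?e (- a) y)"
      using gaussian_density_nonneg[OF total, of y]
      by (simp add: ennreal_mult[symmetric] ennreal_plus[symmetric] algebra_simps del: ennreal_plus)
    then show "ennreal (2 * exp (- a\<^sup>2 / (2 * var))) * (ennreal (?f y) * ?I y)
        \<le> ennreal (?f y * ?e a y) * ?I y + ennreal (?f y * ?e (- a) y) * ?I y"
      unfolding indicator_def by auto
  qed
  also have "\<dots> = slab_mass S u \<epsilon> a + slab_mass S u \<epsilon> (- a)"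
    unfolding slab_mass_shift[OF assms(1-3)] by (rule nn_integral_add) auto
  finally show ?thesis .
qed

lemma nn_integral_slab_mass:
  fixes S :: "real^'n^'n"
  assumes total: "(\<integral>\<^sup>+ y. ennreal (gaussian_density S y) \<partial>lborel) = 1" and "\<epsilon> \<ge> 0"
  shows "(\<integral>\<^sup>+ a. slab_mass S u \<epsilon> a \<partial>lborel) = ennreal (2 * \<epsilon>)"
proof -
  let ?f = "\<lambda>y. ennreal (gaussian_density S y)"
  have "(\<integral>\<^sup>+ a. slab_mass S u \<epsilon> a \<partial>lborel)
      = (\<integral>\<^sup>+ y. (\<integral>\<^sup>+ a. ?f y * indicator {y. \<bar>u \<bullet> y - a\<bar> \<le> \<epsilon>} y \<partial>lborel) \<partial>lborel)"
    unfolding slab_mass_def by (rule lborel_pair.Fubini') (unfold indicator_def, measurable)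
  also have "\<dots> = (\<integral>\<^sup>+ y. ?f y * ennreal (2 * \<epsilon>) \<partial>lborel)"
  proof (rule nn_integral_cong)
    fix y :: "real^'n"
    have "(\<lambda>a. ?f y * indicator {y. \<bar>u \<bullet> y - a\<bar> \<le> \<epsilon>} y) = (\<lambda>a. ?f y * indicator {u \<bullet> y - \<epsilon> .. u \<bullet> y + \<epsilon>} a)"
      by (auto simp: fun_eq_iff indicator_def abs_le_iff)
    then show "(\<integral>\<^sup>+ a. ?f y * indicator {y. \<bar>u \<bullet> y - a\<bar> \<le> \<epsilon>} y \<partial>lborel) = ?f y * ennreal (2 * \<epsilon>)"
      using assms(2) by (simp add: nn_integral_cmult_indicator)
  qed
  also have "\<dots> = ennreal (2 * \<epsilon>)"
    using total by (simp add: nn_integral_multc)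
  finally show ?thesis .
qed

lemma slab_mass_zero_le:
  fixes S :: "real^'n^'n" and u :: "real^'n"
  assumes "pos_def_matrix S" and var: "var = u \<bullet> (S *v u)" "var > 0"
    and total: "(\<integral>\<^sup>+ y. ennreal (gaussian_density S y) \<partial>lborel) = 1" and "\<epsilon> \<ge> 0"
  shows "slab_mass S u \<epsilon> 0 \<le> ennreal (\<epsilon> * sqrt (2 / pi) / sqrt var)"
proof -
  let ?F = "slab_mass S u \<epsilon>"
  have "?F 0 \<le> (\<integral>\<^sup>+ y. ennreal (gaussian_density S y) \<partial>lborel)"
    unfolding slab_mass_def by (intro nn_integral_mono) (simp add: indicator_def)
  then obtain r where r: "?F 0 = ennreal r" "r \<ge> 0"
    using total by (cases "?F 0") (auto simp: top_unique)
  have "ennreal (2 * sqrt (2 * pi * var)) * ?F 0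
      = (\<integral>\<^sup>+ a. ennreal (2 * exp (- a\<^sup>2 / (2 * var))) * ?F 0 \<partial>lborel)"
    using nn_integral_exp_neg_square[OF var(2)] var(2)
    by (simp add: nn_integral_multc nn_integral_cmult ennreal_mult mult.assoc)
  also have "\<dots> \<le> (\<integral>\<^sup>+ a. ?F a + ?F (- a) \<partial>lborel)"
    by (intro nn_integral_mono slab_mass_symmetric_ge[OF assms(1-3) total])
  also have "\<dots> = (\<integral>\<^sup>+ a. ?F a \<partial>lborel) + (\<integral>\<^sup>+ a. ?F a \<partial>distr lborel borel uminus)"
    by (subst nn_integral_add) (auto simp: nn_integral_distr)
  also have "\<dots> = ennreal (4 * \<epsilon>)"
    using nn_integral_slab_mass[OF total assms(5)] assms(5)
    by (simp add: lborel_distr_uminus ennreal_plus[symmetric] del: ennreal_plus)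
  finally have "sqrt (2 * pi * var) * r \<le> 2 * \<epsilon>"
    using r var(2) assms(5) by (simp add: ennreal_mult[symmetric] ennreal_le_iff mult.commute)
  define q where "q = sqrt (2 / pi) / sqrt var"
  have "sqrt (2 * pi * var) * q = 2"
    using var(2) unfolding q_def by (simp add: real_sqrt_mult real_sqrt_divide field_simps)
  then have "r = (sqrt (2 * pi * var) * r) * q / 2"
    by (simp add: ac_simps)
  also have "\<dots> \<le> (2 * \<epsilon>) * q / 2"
    using \<open>sqrt (2 * pi * var) * r \<le> 2 * \<epsilon>\<close> var(2) by (intro divide_right_mono mult_right_mono) (auto simp: q_def)
  finally show ?thesis
    using r by (simp add: q_def ennreal_leI)
qed

lemma normal_law_slab_prob_le:
  fixes Y :: "'a \<Rightarrow> real^'n" and S :: "real^'n^'n"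
  assumes "prob_space M" and law: "has_normal_law M Y S" and "pos_def_matrix S"
    and "u \<noteq> 0" and "\<epsilon> \<ge> 0"
  shows "measure M {\<omega> \<in> space M. \<bar>u \<bullet> Y \<omega>\<bar> \<le> \<epsilon>} \<le> \<epsilon> * sqrt (2 / pi) / sqrt (u \<bullet> (S *v u))"
proof -
  interpret prob_space M by fact
  have var: "u \<bullet> (S *v u) > 0"
    using assms(3,4) by (simp add: pos_def_matrix_def)
  have D: "distributed M lborel Y (\<lambda>y. ennreal (gaussian_density S y))"
    using law unfolding has_normal_law_def .
  have total: "(\<integral>\<^sup>+ y. ennreal (gaussian_density S y) \<partial>lborel) = 1"
    using distributed_emeasure[OF D, of UNIV] emeasure_space_1 by simp
  have slab: "{y. \<bar>u \<bullet> y\<bar> \<le> \<epsilon>} \<in> sets lborel"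
    by measurable
  have "emeasure M {\<omega> \<in> space M. \<bar>u \<bullet> Y \<omega>\<bar> \<le> \<epsilon>} = slab_mass S u \<epsilon> 0"
    using distributed_emeasure[OF D slab] by (simp add: slab_mass_def Int_def conj_commute)
  also have "\<dots> \<le> ennreal (\<epsilon> * sqrt (2 / pi) / sqrt (u \<bullet> (S *v u)))"
    using assms(3,5) var by (intro slab_mass_zero_le total) auto
  finally show ?thesis
    using assms(5) var by (simp add: emeasure_eq_measure ennreal_le_iff)
qed

lemma sign_vec_component_differs:
  fixes x y :: "real^'n"
  assumes "sign_vec x $ i \<noteq> sign_vec y $ i"
  shows "\<bar>x $ i\<bar> \<le> \<bar>x $ i - y $ i\<bar>"
  using assms unfolding sign_vec_def by (auto split: if_splits)

lemma sign_flip_imp_small_coordinate: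
  fixes R :: "real^'c^'c" and W :: "real^'d^'c"
  assumes "orthogonal_matrix R" and "W ** transpose W = mat 1" and "norm (x - y) \<le> \<epsilon>"
    and "hamming_dist (sign_vec (R *v (W *v x))) (sign_vec (R *v (W *v y))) > 0"
  shows "\<exists>i. \<bar>R $ i \<bullet> (W *v x)\<bar> \<le> \<epsilon>"
proof -
  let ?p = "\<lambda>z. R *v (W *v z)"
  obtain i where "sign_vec (?p x) $ i \<noteq> sign_vec (?p y) $ i"
    using assms(4) unfolding hamming_dist_def by (auto simp: card_gt_0_iff)
  then have "\<bar>?p x $ i\<bar> \<le> \<bar>?p (x - y) $ i\<bar>"
    using sign_vec_component_differs by (simp add: matrix_vector_mult_diff_distrib)
  also have "\<dots> \<le> norm (W *v (x - y))"
    using component_le_norm_cart norm_orthogonal_matrix_vector_mult[OF assms(1)] by metis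
  also have "\<dots> \<le> \<epsilon>"
    using norm_matrix_vector_mult_le_if_orthonormal_rows[OF assms(2)] assms(3) by (rule order_trans)
  finally show ?thesis
    by (auto simp: matrix_vector_mul_component)
qed

lemma sign_flip_prob_le_sum:
  fixes R :: "real^'c^'c" and W :: "real^'d^'c" and x1 x2 :: "'a \<Rightarrow> real^'d"
  assumes "prob_space M" and "orthogonal_matrix R" and "W ** transpose W = mat 1"
    and [measurable]: "(\<lambda>\<omega>. W *v x1 \<omega>) \<in> borel_measurable M"
    and "AE \<omega> in M. norm (x1 \<omega> - x2 \<omega>) \<le> \<epsilon>"
  shows "measure M {\<omega> \<in> space M.
            hamming_dist (sign_vec (R *v (W *v x1 \<omega>))) (sign_vec (R *v (W *v x2 \<omega>))) > 0}
         \<le> (\<Sum>i\<in>UNIV. measure M {\<omega> \<in> space M. \<bar>R $ i \<bullet> (W *v x1 \<omega>)\<bar> \<le> \<epsilon>})"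
proof -
  interpret prob_space M by fact
  define B where "B i = {\<omega> \<in> space M. \<bar>R $ i \<bullet> (W *v x1 \<omega>)\<bar> \<le> \<epsilon>}" for i
  have B_events: "B i \<in> events" for i
    unfolding B_def by measurable
  have "measure M {\<omega> \<in> space M.
            hamming_dist (sign_vec (R *v (W *v x1 \<omega>))) (sign_vec (R *v (W *v x2 \<omega>))) > 0}
        \<le> measure M (\<Union>i. B i)"
  proof (rule finite_measure_mono_AE)
    show "AE \<omega> in M. \<omega> \<in> {\<omega> \<in> space M.
            hamming_dist (sign_vec (R *v (W *v x1 \<omega>))) (sign_vec (R *v (W *v x2 \<omega>))) > 0}
          \<longrightarrow> \<omega> \<in> (\<Union>i. B i)"
      using assms(5) by eventually_elim (use sign_flip_imp_small_coordinate[OF assms(2,3)] in \<open>auto simp: B_def\<close>)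
  qed (use B_events in auto)
  also have "\<dots> \<le> (\<Sum>i\<in>UNIV. measure M (B i))"
    by (rule finite_measure_subadditive_finite) (use B_events in auto)
  finally show ?thesis
    unfolding B_def .
qed

lemma mult_div_sqrt_div_eq_powr:
  fixes c T x :: real
  assumes "c > 0" "T > 0"
  shows "c * (x / sqrt (T / c)) = x * c powr (3/2) * T powr (-1/2)"
proof -
  have "c powr (3/2) = c powr 1 * c powr (1/2)"
    unfolding powr_add[symmetric] by simp
  then have "c powr (3/2) = c * sqrt c"
    using assms by (simp add: powr_half_sqrt)
  moreover have "T powr (-1/2) = inverse (T powr (1/2))"
    unfolding powr_minus[symmetric] by simp
  then have "T powr (-1/2) = 1 / sqrt T"
    using assms by (simp add: powr_half_sqrt inverse_eq_divide)
  moreover have "sqrt c > 0" "sqrt T > 0"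
    using assms by simp_all
  ultimately show ?thesis
    by (simp add: real_sqrt_divide)
qed

theorem theorem2:
  fixes M :: "'a measure"
    and W :: "real^'d^'c" and S :: "real^'c^'c" and R :: "real^'c^'c"
    and \<epsilon> :: real and x1 x2 :: "'a \<Rightarrow> real^'d"
  assumes "prob_space M"
    and "CARD('c) \<le> CARD('d)"
    and "W ** transpose W = mat 1"
    and "pos_def_matrix S"
    and "orthogonal_matrix R"
    and "\<forall>i. (R ** S ** transpose R) $ i $ i = trace S / real CARD('c)"
    and "\<epsilon> > 0"
    and "x1 \<in> borel_measurable M" and "x2 \<in> borel_measurable M"
    and "has_normal_law M (\<lambda>\<omega>. W *v x1 \<omega>) S"
    and "has_normal_law M (\<lambda>\<omega>. W *v x2 \<omega>) S"
    and "AE \<omega> in M. norm (x1 \<omega> - x2 \<omega>) \<le> \<epsilon>"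
  shows "measure M {\<omega> \<in> space M.
            hamming_dist (sign_vec (R *v (W *v x1 \<omega>))) (sign_vec (R *v (W *v x2 \<omega>))) > 0}
         \<le> 2 * \<epsilon> * sqrt (2 / pi) * real CARD('c) powr (3/2) * trace S powr (-1/2)"
proof -
  define c where "c = real CARD('c)"
  have row_variance: "R $ i \<bullet> (S *v R $ i) = trace S / c" for i
    using assms(6) matrix_congruence_diagonal[of R S i] unfolding c_def by simp
  have rows_nonzero: "R $ i \<noteq> 0" for i
    using norm_row_orthogonal_matrix[OF assms(5), of i] by auto
  have "trace S / c > 0"
    using assms(4) rows_nonzero row_variance unfolding pos_def_matrix_def by metis
  then have "trace S > 0"
    by (simp add: c_def zero_less_divide_iff)
  have slab_le: "measure M {\<omega> \<in> space M. \<bar>R $ i \<bullet> (W *v x1 \<omega>)\<bar> \<le> \<epsilon>}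
      \<le> \<epsilon> * sqrt (2 / pi) / sqrt (trace S / c)" for i
    unfolding row_variance[of i, symmetric]
    using normal_law_slab_prob_le[OF assms(1,10,4) rows_nonzero] assms(7) by simp
  have "(\<lambda>\<omega>. W *v x1 \<omega>) \<in> borel_measurable M"
    using assms(10) unfolding has_normal_law_def by (auto dest: distributed_measurable)
  then have "measure M {\<omega> \<in> space M.
            hamming_dist (sign_vec (R *v (W *v x1 \<omega>))) (sign_vec (R *v (W *v x2 \<omega>))) > 0}
        \<le> (\<Sum>i\<in>UNIV. measure M {\<omega> \<in> space M. \<bar>R $ i \<bullet> (W *v x1 \<omega>)\<bar> \<le> \<epsilon>})"
    using assms(1,5,3,12) by (intro sign_flip_prob_le_sum)
  also have "\<dots> \<le> c * (\<epsilon> * sqrt (2 / pi) / sqrt (trace S / c))"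
    using sum_mono[OF slab_le] by (simp add: c_def)
  also have "\<dots> = \<epsilon> * sqrt (2 / pi) * c powr (3/2) * trace S powr (-1/2)"
    using \<open>trace S > 0\<close> by (intro mult_div_sqrt_div_eq_powr) (simp_all add: c_def)
  also have "\<dots> \<le> 2 * \<epsilon> * sqrt (2 / pi) * c powr (3/2) * trace S powr (-1/2)"
    using assms(7) by simp
  finally show ?thesis unfolding c_def .
qed

end
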